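(* Let $\tau\in(0,\frac{\pi}{4})\cup(\frac{\pi}{4},\frac{\pi}{2})$, $a=\cot\tau$, $b=\sqrt{|\cot^2\tau-1|}$, and let $F=F_\tau$ be defined on symmetric matrices with eigenvalues $\lambda_1\le\dots\le\lambda_n$ by $F_\tau=\sum_i\ln\big(\frac{\lambda_i+a-b}{\lambda_i+a+b}\big)$ if $0<\tau<\frac{\pi}{4}$ and $F_\tau=\sum_i\arctan\big(\frac{\lambda_i+a-b}{\lambda_i+a+b}\big)$ if $\frac{\pi}{4}<\tau<\frac{\pi}{2}$. Then $F_\tau$ satisfies all of the following: (i) $F_\tau$ is monotonically increasing in each $\lambda_i$ (so $\partial F_\tau/\partial\lambda_i>0$) and is a symmetric function of $(\lambda_1,\dots,\lambda_n)$, i.e. invariant under interchange of any two eigenvalues; (ii) for any $\mu_1>0,\mu_2>0$ there exist positive constants $\lambda,\Lambda$ depending only on $\mu_1,\mu_2$ (and $\tau,n$) such that for every $(\lambda_1,\dots,\lambda_n)\in\Gamma^+_{]\mu_1,\mu_2[}$, $$\Lambda\ge\sum_{i=1}^n\frac{\partial F_\tau}{\partial\lambda_i}\ge\lambda\qquad\text{and}\qquad \Lambda\ge\sum_{i=1}^n\frac{\partial F_\tau}{\partial\lambda_i}\lambda_i^2\ge\lambda;$$ (iii) both $F_\tau(A)$ and $F_\tau^*(A):=-F_\tau(A^{-1})$ are concave on the cone $\Gamma_+$ of positive definite symmetric matrices; (iv) there exist functions $f_1,f_2$, monotonically increasing on $(0,+\infty)$, with $f_1(\lambda_1)\le F_\tau(\lambda_1,\dots,\lambda_n)\le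 f_2(\lambda_n)$ for all $0\le\lambda_1\le\dots\le\lambda_n$ (for which $F_\tau$ is defined), and such that for every $\Phi,\Psi\in\mathcal{L}$ there exist $t_1>0$ and $t_2>0$ with: every $t>0$ satisfying $f_1(t)\le\Phi$ has $t\le t_1$, and every $t>0$ satisfying $f_2(t)\ge\Psi$ has $t\ge t_2$.
   Context: $\Gamma^+_{]\mu_1,\mu_2[}=\{(\lambda_1,\dots,\lambda_n):0\le\lambda_1\le\lambda_2\le\dots\le\lambda_n,\ \lambda_1\le\mu_1,\ \lambda_n\ge\mu_2\}$. $\mathcal{L}=\{\Upsilon:\ \exists\,0<\lambda_1\le\dots\le\lambda_n\text{ with }\Upsilon=F_\tau(\lambda_1,\dots,\lambda_n)\}$, the set of values of $F_\tau$ on positive eigenvalue vectors. $F_\tau(A)$ for a symmetric matrix means $F_\tau$ evaluated at its ordered eigenvalues. *)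

theory Defs
  imports "HOL-Analysis.Analysis"
begin

definition a_par :: "real \<Rightarrow> real" where
  "a_par tau = cot tau"

definition b_par :: "real \<Rightarrow> real" where
  "b_par tau = sqrt \<bar>(cot tau)\<^sup>2 - 1\<bar>"

definition g_tau :: "real \<Rightarrow> real \<Rightarrow> real" where
  "g_tau tau x =
     (if tau < pi / 4
      then ln ((x + a_par tau - b_par tau) / (x + a_par tau + b_par tau))
      else arctan ((x + a_par tau - b_par tau) / (x + a_par tau + b_par tau)))"

text \<open>F_tau as a function of the eigenvalue vector (lambda_1, ..., lambda_n), given as a list.\<close>
definition F_tau :: "real \<Rightarrow> real list \<Rightarrow> real" where
  "F_tau tau xs = (\<Sum>x\<leftarrow>xs. g_tau tau x)"

text \<open>Partial derivative of F_tau with respect to the i-th eigenvalue (0-based index).\<close>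
definition dF_tau :: "real \<Rightarrow> real list \<Rightarrow> nat \<Rightarrow> real" where
  "dF_tau tau xs i = deriv (\<lambda>t. F_tau tau (xs[i := t])) (xs ! i)"

text \<open>Gamma^+_{]mu1,mu2[} for vectors of length n (0-based list indices).\<close>
definition Gamma_mu :: "nat \<Rightarrow> real \<Rightarrow> real \<Rightarrow> real list set" where
  "Gamma_mu n mu1 mu2 = {xs. length xs = n \<and> sorted xs \<and> 0 \<le> xs ! 0
       \<and> xs ! 0 \<le> mu1 \<and> xs ! (n - 1) \<ge> mu2}"

definition L_tau :: "real \<Rightarrow> nat \<Rightarrow> real set" where
  "L_tau tau n = {F_tau tau xs | xs. length xs = n \<and> sorted xs \<and> (\<forall>x\<in>set xs. 0 < x)}"

text \<open>Ordered eigenvalues (with multiplicity) of a real matrix whose characteristic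
  polynomial splits over the reals, in particular of a symmetric matrix:
  the sorted list of the roots of det (x I - A).\<close>
definition eigvals :: "real^'n^'n \<Rightarrow> real list" where
  "eigvals A = (THE xs. length xs = CARD('n) \<and> sorted xs \<and>
       (\<forall>x. det (x *\<^sub>R mat 1 - A) = (\<Prod>l\<leftarrow>xs. x - l)))"

definition F_mat :: "real \<Rightarrow> real^'n^'n \<Rightarrow> real" where
  "F_mat tau A = F_tau tau (eigvals A)"

definition pos_def_sym :: "(real^'n^'n) set" where
  "pos_def_sym = {A. transpose A = A \<and> (\<forall>x. x \<noteq> 0 \<longrightarrow> x \<bullet> (A *v x) > 0)}"

end

(*
  F_tau is the spectral function sum_i g(lambda_i) of the one-variable summand g = g_tau,
  a logarithm or an arctangent of a Moebius map. Its derivative 2b/((x+a-b)(x+a+b)),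
  resp. 2b/((x+a-b)^2+(x+a+b)^2), is positive, decreasing, comparable to 1/(x+e)^2, and
  g'(x) x^2 is increasing. Monotonicity, symmetry, the uniform bounds on Gamma_mu and the
  monotone envelopes n g follow directly from these facts, while the monotonicity of g' and
  of g'(x) x^2 make g and x |-> -g(1/x) concave.
  Concavity of A |-> sum_i G(lambda_i(A)) on the positive definite cone for every concave G
  then comes from the spectral theorem: in the eigenbasis Q of a convex combination
  u A + v B, the diagonal is the same convex combination of the diagonals of A and B,
  and the diagonal of a matrix in any orthonormal basis is obtained from its eigenvalues by
  a doubly stochastic matrix, so by Jensen its G-sum dominates the G-sum of the eigenvalues.
*)

theory Submission
  imports Defs "HOL-Computational_Algebra.Polynomial"
begin

section \<open>The spectral theorem for real symmetric matrices\<close>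

lemma symmetric_matrix_inner_commute:
  fixes A :: "real^'n^'n"
  assumes "transpose A = A"
  shows "u \<bullet> (A *v w) = (A *v u) \<bullet> w"
  by (metis assms dot_lmul_matrix transpose_matrix_vector)

lemma eq_0_if_quadratic_nonpos:
  fixes N K :: real
  assumes N: "N \<ge> 0" and H: "\<And>t. 2 * t * N + t\<^sup>2 * K \<le> 0"
  shows "N = 0"
proof (rule ccontr)
  assume "N \<noteq> 0"
  define t where "t = N / (\<bar>K\<bar> + 1)"
  have t: "t > 0" "t * \<bar>K\<bar> \<le> N" using N \<open>N \<noteq> 0\<close> by (auto simp: t_def field_simps)
  have "t * (t * - \<bar>K\<bar>) \<le> t\<^sup>2 * K" unfolding power2_eq_square mult.assoc
    using t(1) by (intro mult_left_mono) auto
  moreover have "t * (t * \<bar>K\<bar>) \<le> t * N" using t by (intro mult_left_mono) auto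
  moreover have "t * N > 0" using t N \<open>N \<noteq> 0\<close> by simp
  ultimately show False using H[of t] by (simp add: algebra_simps)
qed

text \<open>Rayleigh's principle: the first variation of the quadratic form at the maximiser x in
  the direction y = A x - l x, which stays in the invariant subspace, is twice the squared
  norm of y, and it must vanish.\<close>

lemma symmetric_max_quadratic_form_eigenvector:
  fixes A :: "real^'n^'n"
  assumes sym: "transpose A = A" and S: "subspace S" and inv: "\<And>z. z \<in> S \<Longrightarrow> A *v z \<in> S"
    and xS: "x \<in> S" and nx: "norm x = 1"
    and max: "\<And>z. z \<in> S \<Longrightarrow> norm z = 1 \<Longrightarrow> z \<bullet> (A *v z) \<le> x \<bullet> (A *v x)"
  shows "A *v x = (x \<bullet> (A *v x)) *\<^sub>R x"
proof -
  let ?q = "\<lambda>z. z \<bullet> (A *v z)"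
  define l where "l = ?q x"
  have xx: "x \<bullet> x = 1" using nx by (simp add: norm_eq_1)
  have q_le: "?q z \<le> l * (z \<bullet> z)" if "z \<in> S" for z
  proof (cases "z = 0")
    case False
    let ?u = "z /\<^sub>R norm z"
    have "?q ?u \<le> l" unfolding l_def using that False S by (intro max) (auto simp: subspace_scale)
    moreover have "?q z = (norm z)\<^sup>2 * ?q ?u"
      using False by (simp add: matrix_vector_mult_scaleR power2_eq_square field_simps)
    ultimately have "?q z \<le> (norm z)\<^sup>2 * l" by (simp add: mult_left_mono)
    thus ?thesis by (simp add: power2_norm_eq_inner mult.commute)
  qed simp
  define y where "y = A *v x - l *\<^sub>R x"
  have yS: "y \<in> S" unfolding y_def using inv xS S by (simp add: subspace_diff subspace_scale)
  have xy: "x \<bullet> y = 0" by (simp add: y_def inner_diff_right xx l_def)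
  have "2 * t * (y \<bullet> y) + t\<^sup>2 * (?q y - l * (y \<bullet> y)) \<le> 0" for t
  proof -
    let ?z = "x + t *\<^sub>R y"
    have "?q ?z = ?q x + t * (x \<bullet> (A *v y)) + t * (y \<bullet> (A *v x)) + t\<^sup>2 * ?q y"
      by (simp add: matrix_vector_right_distrib matrix_vector_mult_scaleR inner_add_left
          inner_add_right power2_eq_square algebra_simps)
    also have "x \<bullet> (A *v y) = y \<bullet> (A *v x)"
      using symmetric_matrix_inner_commute[OF sym, of x y] by (simp add: inner_commute)
    also have "y \<bullet> (A *v x) = y \<bullet> y"
      using xy by (simp add: y_def inner_diff_right inner_commute)
    finally have "?q ?z = l + 2 * t * (y \<bullet> y) + t\<^sup>2 * ?q y" by (simp add: l_def)
    moreover have "?z \<bullet> ?z = 1 + t\<^sup>2 * (y \<bullet> y)"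
      by (simp add: inner_add_left inner_add_right xx xy inner_commute[of y x] power2_eq_square)
    moreover have "?q ?z \<le> l * (?z \<bullet> ?z)"
      using xS yS S by (intro q_le) (simp add: subspace_add subspace_scale)
    ultimately show ?thesis by (simp add: algebra_simps)
  qed
  from eq_0_if_quadratic_nonpos[OF inner_ge_zero this] have "y = 0" by simp
  thus ?thesis by (simp add: y_def l_def)
qed

lemma symmetric_invariant_subspace_eigenbasis:
  fixes A :: "real^'n^'n"
  assumes sym: "transpose A = A"
  shows "subspace S \<Longrightarrow> (\<And>z. z \<in> S \<Longrightarrow> A *v z \<in> S) \<Longrightarrow> dim S = k \<Longrightarrow>
    \<exists>B. B \<subseteq> S \<and> finite B \<and> card B = k \<and> pairwise orthogonal B \<and>
        (\<forall>x\<in>B. norm x = 1 \<and> (\<exists>l. A *v x = l *\<^sub>R x))"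
proof (induction k arbitrary: S)
  case 0
  then show ?case by (intro exI[of _ "{}"]) auto
next
  case (Suc k)
  note S = Suc.prems(1) and inv = Suc.prems(2)
  let ?K = "S \<inter> sphere 0 1"
  obtain v where v: "v \<in> S" "v \<noteq> 0" using Suc.prems(3) dim_eq_0[of S] by auto
  hence "v /\<^sub>R norm v \<in> ?K" using S by (auto simp: subspace_scale)
  moreover have "compact ?K" by (intro closed_Int_compact closed_subspace S compact_sphere)
  moreover have "continuous_on ?K (\<lambda>z. z \<bullet> (A *v z))"
    by (intro continuous_on_inner continuous_on_id matrix_vector_mult_linear_continuous_on)
  ultimately obtain x where xK: "x \<in> ?K" and "\<And>z. z \<in> ?K \<Longrightarrow> z \<bullet> (A *v z) \<le> x \<bullet> (A *v x)"
    using continuous_attains_sup[of ?K] by blast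
  hence "A *v x = (x \<bullet> (A *v x)) *\<^sub>R x"
    by (intro symmetric_max_quadratic_form_eigenvector[OF sym S inv]) auto
  then obtain l where Ax: "A *v x = l *\<^sub>R x" by blast
  have xS: "x \<in> S" and nx: "norm x = 1" using xK by auto
  define S' where "S' = S \<inter> {z. x \<bullet> z = 0}"
  have S': "subspace S'" unfolding S'_def using S subspace_hyperplane[of x] by (rule subspace_inter)
  have inv': "A *v z \<in> S'" if "z \<in> S'" for z
    using that inv symmetric_matrix_inner_commute[OF sym, of x z] by (simp add: S'_def Ax)
  have "span (insert x S') = S"
  proof (rule span_subspace)
    show "insert x S' \<subseteq> S" using xS by (auto simp: S'_def)
    show "S \<subseteq> span (insert x S')"
    proof
      fix z assume "z \<in> S"
      hence "z - (x \<bullet> z) *\<^sub>R x \<in> S'" using xS S nx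
        by (simp add: S'_def subspace_diff subspace_scale inner_diff_right norm_eq_1)
      hence "(z - (x \<bullet> z) *\<^sub>R x) + (x \<bullet> z) *\<^sub>R x \<in> span (insert x S')"
        by (intro span_add) (auto simp: span_base span_mul)
      thus "z \<in> span (insert x S')" by simp
    qed
  qed (rule S)
  moreover have xS': "x \<notin> S'" using nx by (simp add: S'_def norm_eq_1)
  hence "x \<notin> span S'" using S' by (metis span_eq_iff)
  ultimately have "dim S' = k"
    using Suc.prems(3) dim_insert[of x S'] dim_span[of "insert x S'"] by simp
  from Suc.IH[OF S' inv' this] obtain B where
    B: "B \<subseteq> S'" "finite B" "card B = k" "pairwise orthogonal B"
       "\<forall>x\<in>B. norm x = 1 \<and> (\<exists>l. A *v x = l *\<^sub>R x)" by blast
  show ?case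
  proof (intro exI[of _ "insert x B"] conjI)
    show "insert x B \<subseteq> S" using B(1) xS by (auto simp: S'_def)
    have "x \<notin> B" using B(1) xS' by auto
    thus "finite (insert x B)" "card (insert x B) = Suc k" using B(2,3) by simp_all
    show "pairwise orthogonal (insert x B)"
      using B(4) B(1) by (auto simp: pairwise_insert S'_def orthogonal_def inner_commute)
    show "\<forall>z\<in>insert x B. norm z = 1 \<and> (\<exists>l. A *v z = l *\<^sub>R z)"
      using B(5) nx Ax by auto
  qed
qed

definition diag_mat :: "('n \<Rightarrow> real) \<Rightarrow> real^'n^'n" where
  "diag_mat d = (\<chi> i j. if i = j then d i else 0)"

theorem symmetric_matrix_spectral:
  fixes A :: "real^'n^'n"
  assumes sym: "transpose A = A"
  obtains P d where "orthogonal_matrix P" "A = P ** diag_mat d ** transpose P"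
proof -
  from symmetric_invariant_subspace_eigenbasis[OF sym subspace_UNIV _ dim_UNIV]
  obtain B where B: "finite B" "card B = CARD('n)" "pairwise orthogonal B"
       "\<forall>x\<in>B. norm x = 1 \<and> (\<exists>l. A *v x = l *\<^sub>R x)" by auto
  obtain h where h: "bij_betw h (UNIV::'n set) B"
    using finite_same_card_bij[of "UNIV::'n set" B] B(1,2) by auto
  define P :: "real^'n^'n" where "P = (\<chi> i j. h j $ i)"
  define d where "d j = (SOME l. A *v h j = l *\<^sub>R h j)" for j
  have hB: "h j \<in> B" for j using h by (auto simp: bij_betw_def)
  have colP: "column j P = h j" for j by (simp add: P_def column_def vec_eq_iff)
  have hd: "A *v h j = d j *\<^sub>R h j" for j
    unfolding d_def using B(4) hB[of j] by (metis (mono_tags, lifting) someI_ex)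
  have oP: "orthogonal_matrix P"
    unfolding orthogonal_matrix_orthonormal_columns colP
  proof (intro conjI allI impI)
    show "norm (h i) = 1" for i using B(4) hB by auto
    show "orthogonal (h i) (h j)" if "i \<noteq> j" for i j
    proof -
      have "h i \<noteq> h j" using h that by (auto simp: bij_betw_def inj_on_def)
      thus ?thesis using B(3) hB unfolding pairwise_def by auto
    qed
  qed
  have "(A ** P) $ i $ j = (A *v h j) $ i" for i j
    by (simp add: matrix_matrix_mult_def matrix_vector_mult_def P_def)
  hence "A ** P = P ** diag_mat d"
    by (simp add: vec_eq_iff hd matrix_matrix_mult_def diag_mat_def P_def if_distrib sum.delta'
        cong: if_cong)
  hence "A = P ** diag_mat d ** transpose P"
    using oP by (metis matrix_mul_assoc matrix_mul_rid orthogonal_matrix_def)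
  thus ?thesis using that oP by blast
qed

section \<open>Eigenvalues of orthogonally diagonalised matrices\<close>

lemma conj_diag_mat_entry:
  "(P ** diag_mat e ** transpose P) $ i $ j = (\<Sum>k\<in>UNIV. P$i$k * e k * P$j$k)"
  by (simp add: matrix_matrix_mult_def diag_mat_def transpose_def if_distrib sum.delta' cong: if_cong)

lemma orthogonal_matrix_rows_inner:
  assumes "orthogonal_matrix (P::real^'n^'n)"
  shows "(\<Sum>k\<in>UNIV. P$i$k * P$j$k) = (if i = j then 1 else 0)"
proof -
  have "(P ** transpose P) $ i $ j = (mat 1 :: real^'n^'n) $ i $ j"
    using assms by (simp add: orthogonal_matrix_def)
  thus ?thesis by (simp add: matrix_matrix_mult_def transpose_def mat_def)
qed

lemma orthogonal_matrix_columns_inner: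
  assumes "orthogonal_matrix (P::real^'n^'n)"
  shows "(\<Sum>k\<in>UNIV. P$k$i * P$k$j) = (if i = j then 1 else 0)"
proof -
  have "(transpose P ** P) $ i $ j = (mat 1 :: real^'n^'n) $ i $ j"
    using assms by (simp add: orthogonal_matrix_def)
  thus ?thesis by (simp add: matrix_matrix_mult_def transpose_def mat_def)
qed

lemma char_matrix_orthogonal_conj_diag_mat:
  fixes P :: "real^'n^'n"
  assumes oP: "orthogonal_matrix P"
  shows "x *\<^sub>R mat 1 - P ** diag_mat d ** transpose P = P ** diag_mat (\<lambda>i. x - d i) ** transpose P"
proof -
  have "(P ** diag_mat (\<lambda>i. x - d i) ** transpose P) $ i $ j
     = x * (\<Sum>k\<in>UNIV. P$i$k * P$j$k) - (\<Sum>k\<in>UNIV. P$i$k * d k * P$j$k)" for i j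
    unfolding conj_diag_mat_entry by (simp add: sum_distrib_left sum_subtractf algebra_simps)
  thus ?thesis
    by (simp add: vec_eq_iff orthogonal_matrix_rows_inner[OF oP] mat_def conj_diag_mat_entry)
qed

lemma det_orthogonal_conj_diag_mat:
  fixes P :: "real^'n^'n"
  assumes oP: "orthogonal_matrix P"
  shows "det (P ** diag_mat e ** transpose P) = (\<Prod>i\<in>UNIV. e i)"
proof -
  have "det P * det P = 1"
    using oP det_mul[of P "transpose P"] by (simp add: orthogonal_matrix_def det_transpose)
  moreover have "det (diag_mat e) = (\<Prod>i\<in>UNIV. e i)"
    by (subst det_diagonal) (auto simp: diag_mat_def)
  ultimately show ?thesis by (simp add: det_mul det_transpose algebra_simps)
qed

lemma prod_mset_linear_factors_inj:
  "(\<Prod>l\<in>#M. [:-l, 1::real:]) = (\<Prod>l\<in>#N. [:-l, 1:]) \<Longrightarrow> M = N"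
proof (induction M arbitrary: N)
  case empty
  show ?case
  proof (rule ccontr)
    assume "{#} \<noteq> N"
    then obtain c where "c \<in># N" by (metis multiset_nonemptyE)
    hence "poly (\<Prod>l\<in>#N. [:-l, 1::real:]) c = 0"
      by (auto simp: poly_prod_mset prod_mset_zero_iff)
    with empty.prems show False by simp
  qed
next
  case (add x M)
  have "poly (\<Prod>l\<in>#N. [:-l, 1::real:]) x = 0"
    by (simp flip: add.prems add: poly_prod_mset)
  hence "x \<in># N" by (auto simp: poly_prod_mset prod_mset_zero_iff)
  then obtain N' where N: "N = add_mset x N'" by (metis multi_member_split)
  have "[:-x, 1:] * (\<Prod>l\<in>#M. [:-l, 1::real:]) = [:-x, 1:] * (\<Prod>l\<in>#N'. [:-l, 1:])"
    using add.prems by (simp add: N)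
  hence "(\<Prod>l\<in>#M. [:-l, 1::real:]) = (\<Prod>l\<in>#N'. [:-l, 1:])"
    using mult_left_cancel[of "[:-x, 1::real:]"] by (simp del: mult_pCons_left)
  from add.IH[OF this] show ?case by (simp add: N)
qed

lemma sorted_eq_if_prod_linear_factors_eq:
  fixes xs ys :: "real list"
  assumes "sorted xs" "sorted ys" "\<And>x. (\<Prod>l\<leftarrow>xs. x - l) = (\<Prod>l\<leftarrow>ys. x - l)"
  shows "xs = ys"
proof -
  have "poly (\<Prod>l\<in>#mset xs. [:-l, 1::real:]) = poly (\<Prod>l\<in>#mset ys. [:-l, 1::real:])"
    using assms(3) by (simp add: fun_eq_iff poly_prod_mset flip: prod_mset_prod_list)
  hence "mset xs = mset ys" by (intro prod_mset_linear_factors_inj) (simp add: poly_eq_poly_eq_iff)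
  thus ?thesis using assms(1,2) by (metis properties_for_sort sorted_sort_id)
qed

definition sorted_values :: "('n::finite \<Rightarrow> real) \<Rightarrow> real list" where
  "sorted_values d = sorted_list_of_multiset (image_mset d (mset_set (UNIV::'n set)))"

lemma sum_list_sorted_values: "(\<Sum>l\<leftarrow>sorted_values d. G l) = (\<Sum>i\<in>UNIV. G (d i))"
  by (simp add: sorted_values_def sum_unfold_sum_mset image_mset.compositionality o_def
      flip: sum_mset_sum_list)

lemma eigvals_orthogonal_conj_diag_mat:
  fixes P :: "real^'n^'n"
  assumes oP: "orthogonal_matrix P"
  shows "eigvals (P ** diag_mat d ** transpose P) = sorted_values d"
  unfolding eigvals_def
proof (rule the_equality)
  have char: "det (x *\<^sub>R mat 1 - P ** diag_mat d ** transpose P) = (\<Prod>l\<leftarrow>sorted_values d. x - l)"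
    for x
    unfolding char_matrix_orthogonal_conj_diag_mat[OF oP] det_orthogonal_conj_diag_mat[OF oP]
    by (simp add: sorted_values_def prod_unfold_prod_mset image_mset.compositionality o_def
        flip: prod_mset_prod_list)
  have "length (sorted_values d) = CARD('n)"
    unfolding sorted_values_def
    by (metis mset_sorted_list_of_multiset size_image_mset size_mset size_mset_set)
  thus "length (sorted_values d) = CARD('n) \<and> sorted (sorted_values d) \<and>
     (\<forall>x. det (x *\<^sub>R mat 1 - P ** diag_mat d ** transpose P) = (\<Prod>l\<leftarrow>sorted_values d. x - l))"
    using char by (simp add: sorted_values_def)
  show "xs = sorted_values d" if "length xs = CARD('n) \<and> sorted xs \<and>
     (\<forall>x. det (x *\<^sub>R mat 1 - P ** diag_mat d ** transpose P) = (\<Prod>l\<leftarrow>xs. x - l))" for xs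
    using that char by (intro sorted_eq_if_prod_linear_factors_eq) (auto simp: sorted_values_def)
qed

section \<open>Concave spectral functions on the positive definite cone\<close>

lemma diag_mat_mult: "diag_mat a ** diag_mat b = diag_mat (\<lambda>i. a i * b i)"
proof -
  have "(diag_mat a ** diag_mat b) $ i $ j
      = (\<Sum>k\<in>UNIV. (if i = k then a i else 0) * (if k = j then b k else 0))" for i j
    by (simp add: matrix_matrix_mult_def diag_mat_def)
  also have "\<dots> i j = (\<Sum>k\<in>UNIV. if k = i then (if i = j then a i * b i else 0) else 0)" for i j
    by (rule sum.cong) auto
  finally show ?thesis by (simp add: vec_eq_iff diag_mat_def)
qed

lemma orthogonal_conj_diag_mat_mult:
  fixes P :: "real^'n^'n"
  assumes "orthogonal_matrix P"
  shows "(P ** diag_mat a ** transpose P) ** (P ** diag_mat b ** transpose P)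
       = P ** diag_mat (\<lambda>i. a i * b i) ** transpose P"
proof -
  have "(P ** diag_mat a ** transpose P) ** (P ** diag_mat b ** transpose P)
      = P ** diag_mat a ** (transpose P ** P) ** diag_mat b ** transpose P"
    by (simp add: matrix_mul_assoc)
  also have "\<dots> = P ** diag_mat (\<lambda>i. a i * b i) ** transpose P"
    using assms by (simp add: orthogonal_matrix_def diag_mat_mult matrix_mul_assoc[symmetric])
  finally show ?thesis .
qed

lemma matrix_inv_orthogonal_conj_diag_mat:
  fixes P :: "real^'n^'n"
  assumes oP: "orthogonal_matrix P" and a: "\<And>i. a i \<noteq> 0"
  shows "matrix_inv (P ** diag_mat a ** transpose P) = P ** diag_mat (\<lambda>i. 1 / a i) ** transpose P"
proof -
  let ?A = "P ** diag_mat a ** transpose P" and ?B = "P ** diag_mat (\<lambda>i. 1 / a i) ** transpose P"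
  have "P ** diag_mat (\<lambda>_. 1) ** transpose P = mat 1"
    using oP by (simp add: orthogonal_matrix_def diag_mat_def mat_def[symmetric])
  hence AB: "?A ** ?B = mat 1" and BA: "?B ** ?A = mat 1"
    using orthogonal_conj_diag_mat_mult[OF oP, of a "\<lambda>i. 1 / a i"]
      orthogonal_conj_diag_mat_mult[OF oP, of "\<lambda>i. 1 / a i" a] a by simp_all
  have inv: "?A ** matrix_inv ?A = mat 1 \<and> matrix_inv ?A ** ?A = mat 1"
    unfolding matrix_inv_def by (rule someI[of _ ?B]) (use AB BA in simp)
  have "matrix_inv ?A = matrix_inv ?A ** (?A ** ?B)" by (simp only: AB matrix_mul_rid)
  also have "\<dots> = (matrix_inv ?A ** ?A) ** ?B" by (simp only: matrix_mul_assoc)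
  finally show ?thesis using inv by simp
qed

lemma convex_pos_def_sym: "convex (pos_def_sym :: (real^'n^'n) set)"
  unfolding convex_def
proof (intro ballI allI impI)
  fix A B :: "real^'n^'n" and u v :: real
  assume A: "A \<in> pos_def_sym" and B: "B \<in> pos_def_sym" and uv: "0 \<le> u" "0 \<le> v" "u + v = 1"
  have "transpose (u *\<^sub>R A + v *\<^sub>R B) = u *\<^sub>R A + v *\<^sub>R B"
    using A B by (simp add: pos_def_sym_def vec_eq_iff transpose_def)
  moreover have "x \<bullet> ((u *\<^sub>R A + v *\<^sub>R B) *v x) > 0" if "x \<noteq> 0" for x
  proof -
    have "x \<bullet> (A *v x) > 0" "x \<bullet> (B *v x) > 0" using A B that by (auto simp: pos_def_sym_def)
    hence "u * (x \<bullet> (A *v x)) + v * (x \<bullet> (B *v x)) > 0"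
      using uv by (cases "u = 0") (auto intro: add_pos_nonneg)
    thus ?thesis
      by (simp add: matrix_vector_mult_add_rdistrib inner_add_right flip: scaleR_matrix_vector_assoc)
  qed
  ultimately show "u *\<^sub>R A + v *\<^sub>R B \<in> pos_def_sym" by (simp add: pos_def_sym_def)
qed

lemma concave_on_cong:
  "S = T \<Longrightarrow> (\<And>x. x \<in> T \<Longrightarrow> f x = g x) \<Longrightarrow> concave_on S f \<longleftrightarrow> concave_on T g"
  by (auto simp: concave_on_iff convex_def)

definition rotated_diag :: "real^'n^'n \<Rightarrow> real^'n^'n \<Rightarrow> 'n \<Rightarrow> real" where
  "rotated_diag Q X i = (transpose Q ** X ** Q) $ i $ i"

lemma rotated_diag_eq_inner: "rotated_diag Q X i = column i Q \<bullet> (X *v column i Q)"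
  by (simp add: rotated_diag_def matrix_matrix_mult_def inner_vec_def matrix_vector_mult_def
      column_def transpose_def sum_distrib_left sum_distrib_right algebra_simps)
    (rule trans[OF _ sum.swap], simp add: mult.left_commute)

lemma rotated_diag_linear:
  "rotated_diag Q (u *\<^sub>R A + v *\<^sub>R B) i = u * rotated_diag Q A i + v * rotated_diag Q B i"
  by (simp add: rotated_diag_eq_inner matrix_vector_mult_add_rdistrib inner_add_right
      flip: scaleR_matrix_vector_assoc)

lemma rotated_diag_pos:
  assumes "orthogonal_matrix Q" "X \<in> pos_def_sym"
  shows "rotated_diag Q X i > 0"
proof -
  have "column i Q \<noteq> 0"
    using assms(1) by (metis norm_zero orthogonal_matrix_orthonormal_columns zero_neq_one)
  thus ?thesis using assms(2) by (simp add: pos_def_sym_def rotated_diag_eq_inner)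
qed

lemma rotated_diag_orthogonal_conj_diag_mat:
  "rotated_diag Q (P ** diag_mat a ** transpose P) i = (\<Sum>k\<in>UNIV. ((transpose Q ** P)$i$k)\<^sup>2 * a k)"
proof -
  have "transpose Q ** (P ** diag_mat a ** transpose P) ** Q
      = (transpose Q ** P) ** diag_mat a ** transpose (transpose Q ** P)"
    by (simp add: matrix_transpose_mul matrix_mul_assoc)
  thus ?thesis
    by (simp add: rotated_diag_def conj_diag_mat_entry power2_eq_square algebra_simps)
qed

lemma rotated_diag_self:
  assumes "orthogonal_matrix Q"
  shows "rotated_diag Q (Q ** diag_mat a ** transpose Q) i = a i"
proof -
  have "transpose Q ** (Q ** diag_mat a ** transpose Q) ** Q
      = (transpose Q ** Q) ** diag_mat a ** (transpose Q ** Q)"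
    by (simp add: matrix_mul_assoc)
  thus ?thesis using assms by (simp add: rotated_diag_def orthogonal_matrix_def diag_mat_def)
qed

text \<open>The squared entries of the orthogonal matrix transpose Q ** P form a doubly stochastic
  matrix, so Jensen's inequality applies row by row.\<close>

lemma sum_concave_rotated_diag_ge:
  fixes P Q :: "real^'n^'n"
  assumes G: "concave_on {0<..} G" and oP: "orthogonal_matrix P" and oQ: "orthogonal_matrix Q"
    and a: "\<And>i. a i > 0"
  shows "(\<Sum>k\<in>UNIV. G (a k)) \<le> (\<Sum>i\<in>UNIV. G (rotated_diag Q (P ** diag_mat a ** transpose P) i))"
proof -
  let ?R = "transpose Q ** P"
  have oR: "orthogonal_matrix ?R" using oP oQ by (simp add: orthogonal_matrix_mul)
  have row: "(\<Sum>k\<in>UNIV. (?R$i$k)\<^sup>2) = 1" for i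
    using orthogonal_matrix_rows_inner[OF oR, of i i] by (simp add: power2_eq_square)
  have col: "(\<Sum>i\<in>UNIV. (?R$i$k)\<^sup>2) = 1" for k
    using orthogonal_matrix_columns_inner[OF oR, of k k] by (simp add: power2_eq_square)
  have "(\<Sum>k\<in>UNIV. G (a k)) = (\<Sum>i\<in>UNIV. \<Sum>k\<in>UNIV. (?R$i$k)\<^sup>2 * G (a k))"
    by (subst sum.swap) (simp add: col flip: sum_distrib_right)
  also have "\<dots> \<le> (\<Sum>i\<in>UNIV. G (\<Sum>k\<in>UNIV. (?R$i$k)\<^sup>2 *\<^sub>R a k))"
    by (intro sum_mono concave_on_sum[OF _ UNIV_not_empty G row]) (auto simp: a)
  finally show ?thesis by (simp add: rotated_diag_orthogonal_conj_diag_mat)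
qed

lemma pos_def_sym_spectral:
  fixes A :: "real^'n^'n"
  assumes "A \<in> pos_def_sym"
  obtains P a where "orthogonal_matrix P" "\<And>i. a i > 0" "A = P ** diag_mat a ** transpose P"
    "eigvals A = sorted_values a"
proof -
  obtain P a where oP: "orthogonal_matrix P" and A: "A = P ** diag_mat a ** transpose P"
    using symmetric_matrix_spectral assms by (auto simp: pos_def_sym_def)
  have "a i > 0" for i
    using rotated_diag_pos[OF oP assms, of i] by (simp add: A rotated_diag_self[OF oP])
  thus ?thesis using that oP A eigvals_orthogonal_conj_diag_mat by blast
qed

text \<open>Write A, B and u A + v B in their own eigenbases P, P' and Q; the diagonal of
  u A + v B in the basis Q is the convex combination of those of A and B, and
  rotating to Q can only increase the sum of G over the diagonal.\<close>

theorem concave_on_pos_def_sym_sum_eigvals: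
  assumes G: "concave_on {0<..} G"
  shows "concave_on (pos_def_sym :: (real^'n^'n) set) (\<lambda>A. \<Sum>l\<leftarrow>eigvals A. G l)"
  unfolding concave_on_iff
proof (intro conjI convex_pos_def_sym ballI allI impI)
  fix A B :: "real^'n^'n" and u v :: real
  assume A: "A \<in> pos_def_sym" and B: "B \<in> pos_def_sym" and uv: "0 \<le> u" "0 \<le> v" "u + v = 1"
  have C: "u *\<^sub>R A + v *\<^sub>R B \<in> pos_def_sym"
    using convex_pos_def_sym A B uv unfolding convex_def by blast
  obtain P a where oP: "orthogonal_matrix P" and a: "\<And>i. a i > 0"
    and Ad: "A = P ** diag_mat a ** transpose P" and EA: "eigvals A = sorted_values a"
    using pos_def_sym_spectral[OF A] by blast
  obtain P' b where oP': "orthogonal_matrix P'" and b: "\<And>i. b i > 0"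
    and Bd: "B = P' ** diag_mat b ** transpose P'" and EB: "eigvals B = sorted_values b"
    using pos_def_sym_spectral[OF B] by blast
  obtain Q c where oQ: "orthogonal_matrix Q" and Cd: "u *\<^sub>R A + v *\<^sub>R B = Q ** diag_mat c ** transpose Q"
    and EC: "eigvals (u *\<^sub>R A + v *\<^sub>R B) = sorted_values c"
    using pos_def_sym_spectral[OF C] by blast
  have c: "c i = u * rotated_diag Q A i + v * rotated_diag Q B i" for i
    using rotated_diag_self[OF oQ, of c i] by (simp flip: Cd add: rotated_diag_linear)
  have "u * (\<Sum>k\<in>UNIV. G (a k)) + v * (\<Sum>k\<in>UNIV. G (b k))
      \<le> u * (\<Sum>i\<in>UNIV. G (rotated_diag Q A i)) + v * (\<Sum>i\<in>UNIV. G (rotated_diag Q B i))"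
    using sum_concave_rotated_diag_ge[OF G oP oQ a] sum_concave_rotated_diag_ge[OF G oP' oQ b] uv Ad Bd
    by (intro add_mono mult_left_mono) auto
  also have "\<dots> = (\<Sum>i\<in>UNIV. u * G (rotated_diag Q A i) + v * G (rotated_diag Q B i))"
    by (simp add: sum.distrib sum_distrib_left)
  also have "\<dots> \<le> (\<Sum>i\<in>UNIV. G (c i))"
    using G rotated_diag_pos[OF oQ A] rotated_diag_pos[OF oQ B] uv
    by (intro sum_mono) (auto simp: c concave_on_iff)
  finally show "u * (\<Sum>l\<leftarrow>eigvals A. G l) + v * (\<Sum>l\<leftarrow>eigvals B. G l)
      \<le> (\<Sum>l\<leftarrow>eigvals (u *\<^sub>R A + v *\<^sub>R B). G l)"
    unfolding EA EB EC sum_list_sorted_values .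
qed

lemma sum_eigvals_matrix_inv:
  fixes A :: "real^'n^'n" and G :: "real \<Rightarrow> 'a::comm_monoid_add"
  assumes "A \<in> pos_def_sym"
  shows "(\<Sum>l\<leftarrow>eigvals (matrix_inv A). G l) = (\<Sum>l\<leftarrow>eigvals A. G (1 / l))"
proof -
  obtain P a where oP: "orthogonal_matrix P" and a: "\<And>i. a i > 0"
    and Ad: "A = P ** diag_mat a ** transpose P" and EA: "eigvals A = sorted_values a"
    using pos_def_sym_spectral[OF assms] by blast
  have Ainv: "matrix_inv A = P ** diag_mat (\<lambda>i. 1 / a i) ** transpose P"
    unfolding Ad using a
    by (intro matrix_inv_orthogonal_conj_diag_mat[OF oP]) (simp add: less_imp_neq[symmetric])
  show ?thesis
    by (simp only: Ainv EA eigvals_orthogonal_conj_diag_mat[OF oP] sum_list_sorted_values)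
qed

section \<open>Admissible summands\<close>

lemma sum_list_map_update:
  fixes g :: "'a \<Rightarrow> 'b::ab_group_add"
  assumes "i < length xs"
  shows "(\<Sum>x\<leftarrow>xs[i := t]. g x) = (\<Sum>x\<leftarrow>xs. g x) - g (xs ! i) + g t"
  using assms
proof (induction xs arbitrary: i)
  case (Cons a xs)
  then show ?case by (cases i) auto
qed simp

lemma sorted_nth_bounds:
  assumes "sorted xs" "i < length xs"
  shows "xs ! 0 \<le> xs ! i" "xs ! i \<le> xs ! (length xs - 1)"
  using sorted_nth_mono[OF assms(1), of 0 i] sorted_nth_mono[OF assms(1), of i "length xs - 1"] assms
  by auto

lemma Gamma_mu_nth_nonneg:
  assumes "xs \<in> Gamma_mu n \<mu>1 \<mu>2" "i < n"
  shows "0 \<le> xs ! i"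
  using assms sorted_nth_bounds(1)[of xs i] by (auto simp: Gamma_mu_def)

text \<open>The constants U, V, W and e give the two-sided bounds on g' needed for the uniform
  ellipticity estimates; the monotonicity of g' yields concavity of g, and that of
  g' x * x^2 yields concavity of -g (1/x).\<close>

locale admissible_summand =
  fixes g g' :: "real \<Rightarrow> real" and U V W e :: real
  assumes U: "U > 0" and V: "V > 0" and W: "W > 0" and e: "e > 0"
  and has_deriv: "\<And>x. 0 \<le> x \<Longrightarrow> (g has_real_derivative g' x) (at x)"
  and deriv_pos: "\<And>x. 0 \<le> x \<Longrightarrow> g' x > 0"
  and deriv_le: "\<And>x. 0 \<le> x \<Longrightarrow> g' x \<le> U"
  and deriv_sq_le: "\<And>x. 0 \<le> x \<Longrightarrow> g' x * x\<^sup>2 \<le> V"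
  and deriv_ge: "\<And>x. 0 \<le> x \<Longrightarrow> W / (x + e)\<^sup>2 \<le> g' x"
  and deriv_antimono: "\<And>x y. 0 \<le> x \<Longrightarrow> x \<le> y \<Longrightarrow> g' y \<le> g' x"
  and deriv_sq_mono: "\<And>x y. 0 \<le> x \<Longrightarrow> x \<le> y \<Longrightarrow> g' x * x\<^sup>2 \<le> g' y * y\<^sup>2"
begin

lemma less:
  assumes "0 \<le> x" "x < y"
  shows "g x < g y"
proof (rule DERIV_pos_imp_increasing[OF \<open>x < y\<close>])
  fix z assume "x \<le> z"
  thus "\<exists>d. (g has_real_derivative d) (at z) \<and> 0 < d"
    using assms(1) has_deriv deriv_pos by (meson order_trans)
qed

lemma le_iff:
  assumes "0 \<le> x" "0 \<le> y"
  shows "g x \<le> g y \<longleftrightarrow> x \<le> y"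
  using less[OF assms(1)] less[OF assms(2)] by (cases x y rule: linorder_cases) force+

lemma concave: "concave_on {0<..} g"
proof -
  have "convex_on {0<..} (\<lambda>x. - g x)"
    by (rule convex_on_realI[where f' = "\<lambda>x. - g' x"])
      (auto intro!: derivative_eq_intros has_deriv deriv_antimono)
  thus ?thesis by (simp add: concave_on_def)
qed

lemma concave_inverse: "concave_on {0<..} (\<lambda>x. - g (1 / x))"
proof -
  have "convex_on {0<..} (\<lambda>x. g (1 / x))"
  proof (rule convex_on_realI[where f' = "\<lambda>x. - (g' (1/x) * (1/x)\<^sup>2)"])
    show "((\<lambda>x. g (1 / x)) has_real_derivative - (g' (1/x) * (1/x)\<^sup>2)) (at x)"
      if "x \<in> {0<..}" for x
      using DERIV_chain2[OF has_deriv DERIV_inverse[of x UNIV]] that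
      by (simp add: inverse_eq_divide power2_eq_square)
    show "- (g' (1/x) * (1/x)\<^sup>2) \<le> - (g' (1/y) * (1/y)\<^sup>2)"
      if "x \<in> {0<..}" "y \<in> {0<..}" "x \<le> y" for x y
      using that by (simp add: deriv_sq_mono frac_le)
  qed simp
  thus ?thesis by (simp add: concave_on_def)
qed

lemma has_real_derivative_update:
  assumes "i < length xs" "0 \<le> xs ! i"
  shows "((\<lambda>t. \<Sum>x\<leftarrow>xs[i := t]. g x) has_real_derivative g' (xs ! i)) (at (xs ! i))"
  unfolding sum_list_map_update[OF assms(1)]
  using has_deriv[OF assms(2)] by (auto intro!: derivative_eq_intros)

lemma deriv_update:
  assumes "i < length xs" "0 \<le> xs ! i"
  shows "deriv (\<lambda>t. \<Sum>x\<leftarrow>xs[i := t]. g x) (xs ! i) = g' (xs ! i)"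
  by (rule DERIV_imp_deriv[OF has_real_derivative_update[OF assms]])

lemma sum_update_less:
  assumes "i < length xs" "0 \<le> s" "s < t"
  shows "(\<Sum>x\<leftarrow>xs[i := s]. g x) < (\<Sum>x\<leftarrow>xs[i := t]. g x)"
  using less[OF assms(2,3)] by (simp add: sum_list_map_update[OF assms(1)])

lemma sum_between_extremes:
  assumes "sorted xs" "0 \<le> xs ! 0" "length xs = n"
  shows "real n * g (xs ! 0) \<le> (\<Sum>x\<leftarrow>xs. g x)" "(\<Sum>x\<leftarrow>xs. g x) \<le> real n * g (xs ! (n - 1))"
proof -
  have sum: "(\<Sum>x\<leftarrow>xs. g x) = (\<Sum>i<n. g (xs ! i))"
    using assms(3) by (simp add: sum_list_sum_nth atLeast0LessThan)
  have bounds: "g (xs ! 0) \<le> g (xs ! i) \<and> g (xs ! i) \<le> g (xs ! (n - 1))" if "i < n" for i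
    using sorted_nth_bounds[OF assms(1)] assms(2,3) that le_iff by (meson order_trans)
  have "(\<Sum>i<n. g (xs ! 0)) \<le> (\<Sum>i<n. g (xs ! i))" "(\<Sum>i<n. g (xs ! i)) \<le> (\<Sum>i<n. g (xs ! (n - 1)))"
    using bounds by (intro sum_mono; simp)+
  thus "real n * g (xs ! 0) \<le> (\<Sum>x\<leftarrow>xs. g x)" "(\<Sum>x\<leftarrow>xs. g x) \<le> real n * g (xs ! (n - 1))"
    by (simp_all add: sum)
qed

lemma deriv_ge_below:
  assumes "0 \<le> x" "x \<le> \<mu>"
  shows "W / (\<mu> + e)\<^sup>2 \<le> g' x"
proof -
  have "W / (\<mu> + e)\<^sup>2 \<le> W / (x + e)\<^sup>2"
    using W e assms by (intro divide_left_mono power_mono mult_pos_pos) auto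
  thus ?thesis using deriv_ge[OF assms(1)] by linarith
qed

lemma deriv_sq_ge_above:
  assumes "0 < \<mu>" "\<mu> \<le> x"
  shows "W * (\<mu> / (\<mu> + e))\<^sup>2 \<le> g' x * x\<^sup>2"
proof -
  have "\<mu> / (\<mu> + e) \<le> x / (x + e)"
    using assms e by (simp add: divide_simps algebra_simps)
  hence "W * (\<mu> / (\<mu> + e))\<^sup>2 \<le> W * (x / (x + e))\<^sup>2"
    using assms e W by (intro mult_left_mono power_mono) auto
  also have "\<dots> = W / (x + e)\<^sup>2 * x\<^sup>2" by (simp add: power_divide)
  also have "\<dots> \<le> g' x * x\<^sup>2" using deriv_ge[of x] assms by (intro mult_right_mono) auto
  finally show ?thesis .
qed

lemma Gamma_mu_deriv_bounds:
  assumes n: "n \<ge> 1" and \<mu>: "\<mu>1 > 0" "\<mu>2 > 0"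
  shows "\<exists>lam Lam. lam > 0 \<and> Lam > 0 \<and>
          (\<forall>xs\<in>Gamma_mu n \<mu>1 \<mu>2.
             Lam \<ge> (\<Sum>i<n. g' (xs ! i)) \<and> (\<Sum>i<n. g' (xs ! i)) \<ge> lam \<and>
             Lam \<ge> (\<Sum>i<n. g' (xs ! i) * (xs ! i)\<^sup>2) \<and> (\<Sum>i<n. g' (xs ! i) * (xs ! i)\<^sup>2) \<ge> lam)"
proof (intro exI conjI ballI)
  let ?lam = "min (W / (\<mu>1 + e)\<^sup>2) (W * (\<mu>2 / (\<mu>2 + e))\<^sup>2)" and ?Lam = "real n * (U + V)"
  show "?lam > 0" "?Lam > 0" using \<mu> W e U V n by auto
  fix xs assume "xs \<in> Gamma_mu n \<mu>1 \<mu>2"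
  hence xs: "0 \<le> xs ! 0" "xs ! 0 \<le> \<mu>1" "\<mu>2 \<le> xs ! (n - 1)"
    by (auto simp: Gamma_mu_def)
  have nonneg: "0 \<le> xs ! i" if "i < n" for i
    using Gamma_mu_nth_nonneg[OF \<open>xs \<in> Gamma_mu n \<mu>1 \<mu>2\<close> that] .
  have "(\<Sum>i<n. g' (xs ! i)) \<le> (\<Sum>i<n. U)" "(\<Sum>i<n. g' (xs ! i) * (xs ! i)\<^sup>2) \<le> (\<Sum>i<n. V)"
    using deriv_le deriv_sq_le nonneg by (intro sum_mono; simp)+
  moreover have "real n * U \<ge> 0" "real n * V \<ge> 0" using U V by simp_all
  ultimately show "?Lam \<ge> (\<Sum>i<n. g' (xs ! i))" "?Lam \<ge> (\<Sum>i<n. g' (xs ! i) * (xs ! i)\<^sup>2)"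
    by (simp_all add: distrib_left)
  have terms_nonneg: "0 \<le> g' (xs ! i)" "0 \<le> g' (xs ! i) * (xs ! i)\<^sup>2" if "i < n" for i
    using deriv_pos[OF nonneg[OF that]] by simp_all
  have "?lam \<le> g' (xs ! 0)" using deriv_ge_below[OF xs(1,2)] by linarith
  also have "\<dots> \<le> (\<Sum>i<n. g' (xs ! i))"
    using n terms_nonneg by (intro member_le_sum) auto
  finally show "(\<Sum>i<n. g' (xs ! i)) \<ge> ?lam" .
  have "?lam \<le> g' (xs ! (n - 1)) * (xs ! (n - 1))\<^sup>2"
    using deriv_sq_ge_above[OF \<mu>(2) xs(3)] by linarith
  also have "\<dots> \<le> (\<Sum>i<n. g' (xs ! i) * (xs ! i)\<^sup>2)"
    using n terms_nonneg by (intro member_le_sum) auto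
  finally show "(\<Sum>i<n. g' (xs ! i) * (xs ! i)\<^sup>2) \<ge> ?lam" .
qed

text \<open>Both envelopes are n g: the sum lies between n g of its smallest and of its largest
  argument, and g is strictly increasing.\<close>

lemma monotone_envelopes:
  assumes n: "n \<ge> 1"
  defines "L \<equiv> {\<Sum>x\<leftarrow>xs. g x | xs. length xs = n \<and> sorted xs \<and> (\<forall>x\<in>set xs. 0 < x)}"
  shows "\<exists>f1 f2 :: real \<Rightarrow> real.
        mono_on {0<..} f1 \<and> mono_on {0<..} f2 \<and>
        (\<forall>xs. length xs = n \<and> sorted xs \<and> 0 \<le> xs ! 0 \<longrightarrow>
           f1 (xs ! 0) \<le> (\<Sum>x\<leftarrow>xs. g x) \<and> (\<Sum>x\<leftarrow>xs. g x) \<le> f2 (xs ! (n - 1))) \<and>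
        (\<forall>Phi\<in>L. \<forall>Psi\<in>L. \<exists>t1 t2. t1 > 0 \<and> t2 > 0 \<and>
           (\<forall>t>0. f1 t \<le> Phi \<longrightarrow> t \<le> t1) \<and>
           (\<forall>t>0. f2 t \<ge> Psi \<longrightarrow> t \<ge> t2))"
proof (intro exI[of _ "\<lambda>t. real n * g t"] conjI allI impI ballI)
  show "mono_on {0<..} (\<lambda>t. real n * g t)"
    by (rule mono_onI) (auto simp: le_iff intro!: mult_left_mono)
  then show "mono_on {0<..} (\<lambda>t. real n * g t)" .
  show "real n * g (xs ! 0) \<le> (\<Sum>x\<leftarrow>xs. g x)" "(\<Sum>x\<leftarrow>xs. g x) \<le> real n * g (xs ! (n - 1))"
    if "length xs = n \<and> sorted xs \<and> 0 \<le> xs ! 0" for xs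
    using sum_between_extremes that by blast+
next
  fix Phi Psi assume "Phi \<in> L" "Psi \<in> L"
  then obtain ys zs where ys: "Phi = (\<Sum>x\<leftarrow>ys. g x)" "length ys = n" "sorted ys" "\<forall>x\<in>set ys. 0 < x"
    and zs: "Psi = (\<Sum>x\<leftarrow>zs. g x)" "length zs = n" "sorted zs" "\<forall>x\<in>set zs. 0 < x"
    unfolding L_def by blast
  have "ys ! (n - 1) \<in> set ys" "ys ! 0 \<in> set ys" "zs ! 0 \<in> set zs"
    using ys(2) zs(2) n by auto
  hence pos: "ys ! (n - 1) > 0" "ys ! 0 > 0" "zs ! 0 > 0" using ys(4) zs(4) by auto
  have "Phi \<le> real n * g (ys ! (n - 1))" and "real n * g (zs ! 0) \<le> Psi"
    using sum_between_extremes(2)[OF ys(3) _ ys(2)] sum_between_extremes(1)[OF zs(3) _ zs(2)]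
      pos ys(1) zs(1) by simp_all
  moreover have cancel: "real n * g s \<le> real n * g t \<longleftrightarrow> s \<le> t" if "0 \<le> s" "0 \<le> t" for s t
    using n le_iff[OF that] by (simp add: mult_le_cancel_left_pos)
  ultimately have "t \<le> ys ! (n - 1)" if "t > 0" "real n * g t \<le> Phi" for t
    using that pos cancel[of t "ys ! (n - 1)"] by linarith
  moreover have "zs ! 0 \<le> t" if "t > 0" "real n * g t \<ge> Psi" for t
    using that pos \<open>real n * g (zs ! 0) \<le> Psi\<close> cancel[of "zs ! 0" t] by linarith
  ultimately show "\<exists>t1 t2. t1 > 0 \<and> t2 > 0 \<and>
           (\<forall>t>0. real n * g t \<le> Phi \<longrightarrow> t \<le> t1) \<and> (\<forall>t>0. real n * g t \<ge> Psi \<longrightarrow> t \<ge> t2)"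
    using pos by blast
qed

end

section \<open>The summands of F_tau\<close>

lemma admissible_summand_from_denominator:
  fixes g Den :: "real \<Rightarrow> real" and k m e :: real
  assumes k: "k > 0" and m: "m > 0" and e: "e > 0"
    and has_deriv: "\<And>x. 0 \<le> x \<Longrightarrow> (g has_real_derivative k / Den x) (at x)"
    and ge_m: "\<And>x. 0 \<le> x \<Longrightarrow> m \<le> Den x"
    and ge_sq: "\<And>x. 0 \<le> x \<Longrightarrow> x\<^sup>2 \<le> Den x"
    and le_sq: "\<And>x. 0 \<le> x \<Longrightarrow> Den x \<le> 2 * (x + e)\<^sup>2"
    and mono: "\<And>x y. 0 \<le> x \<Longrightarrow> x \<le> y \<Longrightarrow> Den x \<le> Den y"
    and sq_ratio: "\<And>x y. 0 \<le> x \<Longrightarrow> x \<le> y \<Longrightarrow> x\<^sup>2 * Den y \<le> y\<^sup>2 * Den x"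
  shows "admissible_summand g (\<lambda>x. k / Den x) (k / m) k (k / 2) e"
proof
  have pos: "0 \<le> x \<Longrightarrow> Den x > 0" for x using ge_m[of x] m by simp
  show "k / m > 0" "k > 0" "k / 2 > 0" "e > 0" using k m e by auto
  show "(g has_real_derivative k / Den x) (at x)" if "0 \<le> x" for x using has_deriv that .
  fix x :: real assume x: "0 \<le> x"
  show "k / Den x > 0" using pos[OF x] k by simp
  show "k / Den x \<le> k / m" using ge_m[OF x] m k by (intro divide_left_mono) auto
  show "k / Den x * x\<^sup>2 \<le> k"
    using ge_sq[OF x] pos[OF x] k by (simp add: field_simps mult_left_mono)
  have "k / (2 * (x + e)\<^sup>2) \<le> k / Den x"
    using le_sq[OF x] pos[OF x] k x e by (intro divide_left_mono) auto
  thus "k / 2 / (x + e)\<^sup>2 \<le> k / Den x" by simp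
  fix y :: real assume xy: "x \<le> y"
  show "k / Den y \<le> k / Den x"
    using mono[OF x xy] pos x xy k by (intro divide_left_mono) auto
  show "k / Den x * x\<^sup>2 \<le> k / Den y * y\<^sup>2"
    using sq_ratio[OF x xy] pos[OF x] pos[of y] x xy k by (simp add: field_simps mult_left_mono)
qed

lemma admissible_summand_ln:
  fixes c d :: real
  assumes c: "0 < c" and cd: "c < d"
  shows "admissible_summand (\<lambda>x. ln ((x + c) / (x + d))) (\<lambda>x. (d - c) / ((x + c) * (x + d)))
           ((d - c) / (c * d)) (d - c) ((d - c) / 2) d"
proof (rule admissible_summand_from_denominator)
  show "d - c > 0" "c * d > 0" "d > 0" using c cd by auto
  show "((\<lambda>x. ln ((x + c) / (x + d))) has_real_derivative (d - c) / ((x + c) * (x + d))) (at x)"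
    if "0 \<le> x" for x
  proof -
    have xc: "x + c > 0" and xd: "x + d > 0" using that c cd by auto
    have "((\<lambda>x. (x + c) / (x + d)) has_real_derivative (d - c) / (x + d)\<^sup>2) (at x)"
      using xd by (auto intro!: derivative_eq_intros simp: power2_eq_square algebra_simps)
    from DERIV_chain2[OF DERIV_ln_divide this]
    have "((\<lambda>x. ln ((x + c) / (x + d))) has_real_derivative
           1 / ((x + c) / (x + d)) * ((d - c) / (x + d)\<^sup>2)) (at x)"
      using xc xd by simp
    moreover have "1 / (p / q) * ((d - c) / q\<^sup>2) = (d - c) / (p * q)" if "p > 0" "q > 0" for p q
      using that by (simp add: field_simps power2_eq_square)
    note this[OF xc xd]
    ultimately show ?thesis by simp
  qed
  fix x :: real assume x: "0 \<le> x"
  show "c * d \<le> (x + c) * (x + d)" "x\<^sup>2 \<le> (x + c) * (x + d)"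
    using x c cd by (simp_all add: algebra_simps power2_eq_square)
  have "(x + c) * (x + d) \<le> (x + d) * (x + d)" using x cd c by (intro mult_right_mono) auto
  thus "(x + c) * (x + d) \<le> 2 * (x + d)\<^sup>2"
    unfolding power2_eq_square using zero_le_square[of "x + d"] by linarith
  fix y :: real assume xy: "x \<le> y"
  show "(x + c) * (x + d) \<le> (y + c) * (y + d)" using x xy c cd by (intro mult_mono) auto
  have "y\<^sup>2 * ((x + c) * (x + d)) - x\<^sup>2 * ((y + c) * (y + d))
      = (c + d) * (x * y * (y - x)) + c * d * (y * y - x * x)"
    by (simp add: algebra_simps power2_eq_square)
  moreover have "0 \<le> (c + d) * (x * y * (y - x)) + c * d * (y * y - x * x)"
    using x xy c cd by (intro add_nonneg_nonneg mult_nonneg_nonneg) (auto simp: mult_mono)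
  ultimately show "x\<^sup>2 * ((y + c) * (y + d)) \<le> y\<^sup>2 * ((x + c) * (x + d))" by linarith
qed

lemma admissible_summand_arctan:
  fixes c d :: real
  assumes d: "0 < d" and cd: "c < d" and cpd: "0 < c + d"
  shows "admissible_summand (\<lambda>x. arctan ((x + c) / (x + d))) (\<lambda>x. (d - c) / ((x + c)\<^sup>2 + (x + d)\<^sup>2))
           ((d - c) / d\<^sup>2) (d - c) ((d - c) / 2) (d + \<bar>c\<bar>)"
proof (rule admissible_summand_from_denominator)
  show "d - c > 0" "d\<^sup>2 > 0" "d + \<bar>c\<bar> > 0" using d cd by auto
  show "((\<lambda>x. arctan ((x + c) / (x + d))) has_real_derivative (d - c) / ((x + c)\<^sup>2 + (x + d)\<^sup>2)) (at x)"
    if "0 \<le> x" for x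
  proof -
    have xd: "x + d > 0" using that d by auto
    have "((\<lambda>x. (x + c) / (x + d)) has_real_derivative (d - c) / (x + d)\<^sup>2) (at x)"
      using xd by (auto intro!: derivative_eq_intros simp: power2_eq_square algebra_simps)
    from DERIV_chain2[OF DERIV_arctan this]
    have "((\<lambda>x. arctan ((x + c) / (x + d))) has_real_derivative
           inverse (1 + ((x + c) / (x + d))\<^sup>2) * ((d - c) / (x + d)\<^sup>2)) (at x)" .
    moreover have "1 + ((x + c) / (x + d))\<^sup>2 = ((x + c)\<^sup>2 + (x + d)\<^sup>2) / (x + d)\<^sup>2"
      using xd by (simp add: field_simps power_divide)
    moreover have "inverse (S / q\<^sup>2) * ((d - c) / q\<^sup>2) = (d - c) / S" if "q > 0" "S > 0" for q S
      using that by (simp add: field_simps power2_eq_square)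
    note this[OF xd, of "(x + c)\<^sup>2 + (x + d)\<^sup>2"]
    moreover have "(x + c)\<^sup>2 + (x + d)\<^sup>2 > 0" using xd by (simp add: add_nonneg_pos)
    ultimately show ?thesis by simp
  qed
  fix x :: real assume x: "0 \<le> x"
  have "d\<^sup>2 \<le> (x + d)\<^sup>2" "x\<^sup>2 \<le> (x + d)\<^sup>2" using x d by (intro power_mono; simp)+
  thus "d\<^sup>2 \<le> (x + c)\<^sup>2 + (x + d)\<^sup>2" "x\<^sup>2 \<le> (x + c)\<^sup>2 + (x + d)\<^sup>2"
    using zero_le_power2[of "x + c"] by linarith+
  have "\<bar>x + c\<bar>\<^sup>2 \<le> (x + (d + \<bar>c\<bar>))\<^sup>2" "(x + d)\<^sup>2 \<le> (x + (d + \<bar>c\<bar>))\<^sup>2"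
    using x d by (intro power_mono; linarith)+
  thus "(x + c)\<^sup>2 + (x + d)\<^sup>2 \<le> 2 * (x + (d + \<bar>c\<bar>))\<^sup>2" by simp
  fix y :: real assume xy: "x \<le> y"
  have "((y + c)\<^sup>2 + (y + d)\<^sup>2) - ((x + c)\<^sup>2 + (x + d)\<^sup>2) = (y - x) * (2 * x + 2 * y + 2 * (c + d))"
    by (simp add: algebra_simps power2_eq_square)
  moreover have "(y - x) * (2 * x + 2 * y + 2 * (c + d)) \<ge> 0"
    using x xy cpd by (intro mult_nonneg_nonneg) auto
  ultimately show "(x + c)\<^sup>2 + (x + d)\<^sup>2 \<le> (y + c)\<^sup>2 + (y + d)\<^sup>2" by linarith
  have "y\<^sup>2 * ((x + c)\<^sup>2 + (x + d)\<^sup>2) - x\<^sup>2 * ((y + c)\<^sup>2 + (y + d)\<^sup>2)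
      = 2 * (c + d) * (x * y * (y - x)) + (c * c + d * d) * (y * y - x * x)"
    by (simp add: algebra_simps power2_eq_square)
  moreover have "0 \<le> 2 * (c + d) * (x * y * (y - x))" "0 \<le> (c * c + d * d) * (y * y - x * x)"
    using x xy cpd by (auto intro!: mult_nonneg_nonneg simp: mult_mono)
  ultimately show "x\<^sup>2 * ((y + c)\<^sup>2 + (y + d)\<^sup>2) \<le> y\<^sup>2 * ((x + c)\<^sup>2 + (x + d)\<^sup>2)" by linarith
qed

lemma g_tau_admissible:
  assumes tau: "(0 < tau \<and> tau < pi / 4) \<or> (pi / 4 < tau \<and> tau < pi / 2)"
  shows "\<exists>g' U V W e. admissible_summand (g_tau tau) g' U V W e"
proof -
  define a where "a = cot tau"
  define b where "b = b_par tau"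
  have b: "b = sqrt \<bar>a\<^sup>2 - 1\<bar>" by (simp add: a_def b_def b_par_def)
  have g: "g_tau tau = (\<lambda>x. if tau < pi / 4 then ln ((x + (a - b)) / (x + (a + b)))
             else arctan ((x + (a - b)) / (x + (a + b))))"
    by (simp add: fun_eq_iff g_tau_def a_def b_def a_par_def algebra_simps)
  have a: "a = inverse (tan tau)" by (simp add: a_def cot_altdef)
  from tau show ?thesis
  proof
    assume t: "0 < tau \<and> tau < pi / 4"
    have "tan tau < tan (pi / 4)" "tan tau > 0" using t by (auto intro: tan_monotone tan_gt_zero)
    hence a1: "a > 1" by (simp add: a tan_45 one_less_inverse)
    hence "a\<^sup>2 > 1" by (simp add: power2_eq_square less_1_mult)
    moreover have "sqrt (a\<^sup>2 - 1) < sqrt (a\<^sup>2)" by (rule real_sqrt_less_mono) simp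
    ultimately have b0: "b > 0" and "b < a" using a1 by (simp_all add: b)
    hence "\<exists>g' U V W e. admissible_summand (\<lambda>x. ln ((x + (a - b)) / (x + (a + b)))) g' U V W e"
      using b0 admissible_summand_ln[of "a - b" "a + b"] by (auto; blast)
    thus ?thesis using t by (auto simp: g)
  next
    assume t: "pi / 4 < tau \<and> tau < pi / 2"
    have "tan (pi / 4) < tan tau" using t by (intro tan_monotone) auto
    hence a1: "a < 1" and a0: "a > 0" by (simp_all add: a tan_45 inverse_less_1_iff)
    hence "a\<^sup>2 < 1" by (simp add: power_less_one_iff abs_square_less_1)
    hence b0: "b > 0" by (simp add: b)
    hence "\<exists>g' U V W e. admissible_summand (\<lambda>x. arctan ((x + (a - b)) / (x + (a + b)))) g' U V W e"
      using a0 admissible_summand_arctan[of "a + b" "a - b"] by (auto; blast)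
    thus ?thesis using t by (auto simp: g)
  qed
qed

theorem lemma3p2:
  fixes tau :: real
  assumes tau: "(0 < tau \<and> tau < pi / 4) \<or> (pi / 4 < tau \<and> tau < pi / 2)"
  defines "n \<equiv> CARD('n)"
  shows
    "(\<forall>xs i. length xs = n \<and> (\<forall>x\<in>set xs. 0 \<le> x) \<and> i < n \<longrightarrow>
        (\<forall>s t. 0 \<le> s \<and> s < t \<longrightarrow> F_tau tau (xs[i := s]) < F_tau tau (xs[i := t])) \<and>
        ((\<lambda>t. F_tau tau (xs[i := t])) has_real_derivative dF_tau tau xs i) (at (xs ! i)) \<and>
        dF_tau tau xs i > 0)
   \<and> (\<forall>xs i j. length xs = n \<and> i < n \<and> j < n \<longrightarrow>
        F_tau tau (xs[i := xs ! j, j := xs ! i]) = F_tau tau xs)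
   \<and> (\<forall>mu1 mu2. mu1 > 0 \<and> mu2 > 0 \<longrightarrow>
        (\<exists>lam Lam. lam > 0 \<and> Lam > 0 \<and>
          (\<forall>xs\<in>Gamma_mu n mu1 mu2.
             Lam \<ge> (\<Sum>i<n. dF_tau tau xs i) \<and> (\<Sum>i<n. dF_tau tau xs i) \<ge> lam \<and>
             Lam \<ge> (\<Sum>i<n. dF_tau tau xs i * (xs ! i)\<^sup>2) \<and>
             (\<Sum>i<n. dF_tau tau xs i * (xs ! i)\<^sup>2) \<ge> lam)))
   \<and> concave_on (pos_def_sym :: (real^'n^'n) set) (F_mat tau)
   \<and> concave_on (pos_def_sym :: (real^'n^'n) set) (\<lambda>A. - F_mat tau (matrix_inv A))
   \<and> (\<exists>f1 f2 :: real \<Rightarrow> real.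
        mono_on {0<..} f1 \<and> mono_on {0<..} f2 \<and>
        (\<forall>xs. length xs = n \<and> sorted xs \<and> 0 \<le> xs ! 0 \<longrightarrow>
           f1 (xs ! 0) \<le> F_tau tau xs \<and> F_tau tau xs \<le> f2 (xs ! (n - 1))) \<and>
        (\<forall>Phi\<in>L_tau tau n. \<forall>Psi\<in>L_tau tau n. \<exists>t1 t2. t1 > 0 \<and> t2 > 0 \<and>
           (\<forall>t>0. f1 t \<le> Phi \<longrightarrow> t \<le> t1) \<and>
           (\<forall>t>0. f2 t \<ge> Psi \<longrightarrow> t \<ge> t2)))"
proof -
  obtain g' U V W e where "admissible_summand (g_tau tau) g' U V W e"
    using g_tau_admissible[OF tau] by blast
  then interpret admissible_summand "g_tau tau" g' U V W e .
  have n: "n \<ge> 1" unfolding n_def by (simp add: Suc_leI)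
  have dF: "dF_tau tau xs i = g' (xs ! i)" if "i < length xs" "0 \<le> xs ! i" for xs i
    unfolding dF_tau_def F_tau_def using deriv_update[OF that] .
  have dF_Gamma: "dF_tau tau xs i = g' (xs ! i)" if "xs \<in> Gamma_mu n mu1 mu2" "i < n" for xs mu1 mu2 i
    using dF Gamma_mu_nth_nonneg[OF that] that by (simp add: Gamma_mu_def)
  have Gamma_sums: "(\<Sum>i<n. dF_tau tau xs i) = (\<Sum>i<n. g' (xs ! i))"
    "(\<Sum>i<n. dF_tau tau xs i * (xs ! i)\<^sup>2) = (\<Sum>i<n. g' (xs ! i) * (xs ! i)\<^sup>2)"
    if "xs \<in> Gamma_mu n mu1 mu2" for xs mu1 mu2
    using dF_Gamma[OF that] by (auto intro: sum.cong)
  have F_inv: "- F_mat tau (matrix_inv A) = (\<Sum>l\<leftarrow>eigvals A. - g_tau tau (1 / l))"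
    if "A \<in> pos_def_sym" for A :: "real^'n^'n"
    using sum_eigvals_matrix_inv[OF that, of "\<lambda>l. - g_tau tau l"]
    by (simp add: F_mat_def F_tau_def uminus_sum_list_map o_def)
  show ?thesis
    unfolding F_tau_def L_tau_def
    apply (intro conjI)
    subgoal using sum_update_less has_real_derivative_update deriv_pos dF by auto
    subgoal by (simp add: mset_swap flip: sum_mset_sum_list)
    subgoal using Gamma_mu_deriv_bounds[OF n] by (simp add: Gamma_sums cong: ball_cong)
    subgoal using concave_on_pos_def_sym_sum_eigvals[OF concave]
      by (simp add: F_mat_def[abs_def] F_tau_def)
    subgoal using concave_on_pos_def_sym_sum_eigvals[OF concave_inverse] F_inv
      by (simp cong: concave_on_cong)
    subgoal using monotone_envelopes[OF n] by simp
    done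
qed

end
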